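(* For $0\le r\le\min\{m,n\}$, the monomials $\mathfrak{m}(\mathcal{R})$ for $\mathcal{R}\in\bigsqcup_{d=0}^{r}\mathcal{Z}_{n,m,d}$ descend to a spanning set of $R(\mathcal{Z}_{n,m,r})$. In particular $R(\mathcal{Z}_{n,m,r})_d=\{0\}$ for $d>r$.
   Context: Fix positive integers $n,m$. $\mathbb{C}[\mathbf{x}_{n\times m}]$ is the polynomial ring in variables $x_{i,j}$ ($1\le i\le n,1\le j\le m$). For finite $\mathcal{Z}\subseteq\mathrm{Mat}_{n\times m}(\mathbb{C})$, $\mathbf{I}(\mathcal{Z})$ is its vanishing ideal, $\mathrm{gr}\,\mathbf{I}(\mathcal{Z})$ the ideal generated by top-degree homogeneous components of its nonzero elements, and $R(\mathcal{Z})=\mathbb{C}[\mathbf{x}_{n\times m}]/\mathrm{gr}\,\mathbf{I}(\mathcal{Z})$, graded by degree. A rook placement on the $n\times m$ board is a subset $\mathcal{R}\subseteq[n]\times[m]$ with at most one element in each row and column, identified with its $0/1$ matrix; $\mathcal{Z}_{n,m,d}$ is the set of rook placements with exactly $d$ elements; $\mathfrak{m}(\mathcal{R}):=\prod_{(i,j)\in\mathcal{R}}x_{i,j}$. *)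

theory Defs
  imports "HOL-Analysis.Analysis" "HOL-Library.Poly_Mapping"
begin

text \<open>Multivariate polynomials in variables x_(i,j), i,j positive naturals, over the
complex numbers: finitely supported maps from exponent vectors (finitely supported
maps from variable indices (i,j) to exponents) to coefficients.\<close>

type_synonym monom = "(nat \<times> nat) \<Rightarrow>\<^sub>0 nat"
type_synonym mpoly = "monom \<Rightarrow>\<^sub>0 complex"

definition poly_ring :: "nat \<Rightarrow> nat \<Rightarrow> mpoly set" where
  "poly_ring n m = {p. \<forall>a \<in> Poly_Mapping.keys p. Poly_Mapping.keys a \<subseteq> {1..n} \<times> {1..m}}"

text \<open>Matrices are represented as functions of (row, column).\<close>
definition eval_mpoly :: "mpoly \<Rightarrow> (nat \<Rightarrow> nat \<Rightarrow> complex) \<Rightarrow> complex" where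
  "eval_mpoly p A = (\<Sum>a\<in>Poly_Mapping.keys p. Poly_Mapping.lookup p a * (\<Prod>v\<in>Poly_Mapping.keys a. A (fst v) (snd v) ^ Poly_Mapping.lookup a v))"

definition mdeg :: "monom \<Rightarrow> nat" where
  "mdeg a = (\<Sum>v\<in>Poly_Mapping.keys a. Poly_Mapping.lookup a v)"

definition pdeg :: "mpoly \<Rightarrow> nat" where
  "pdeg p = Max (mdeg ` Poly_Mapping.keys p)"

definition top_comp :: "mpoly \<Rightarrow> mpoly" where
  "top_comp p = (\<Sum>a\<in>Poly_Mapping.keys p. if mdeg a = pdeg p then Poly_Mapping.single a (Poly_Mapping.lookup p a) else 0)"

definition homogeneous :: "nat \<Rightarrow> mpoly \<Rightarrow> bool" where
  "homogeneous d p \<longleftrightarrow> (\<forall>a\<in>Poly_Mapping.keys p. mdeg a = d)"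

definition vanishing_ideal :: "nat \<Rightarrow> nat \<Rightarrow> (nat \<Rightarrow> nat \<Rightarrow> complex) set \<Rightarrow> mpoly set" where
  "vanishing_ideal n m Z = {p \<in> poly_ring n m. \<forall>A\<in>Z. eval_mpoly p A = 0}"

definition ideal_gen :: "nat \<Rightarrow> nat \<Rightarrow> mpoly set \<Rightarrow> mpoly set" where
  "ideal_gen n m S = {p. \<exists>(N::nat) (c::nat \<Rightarrow> mpoly) (f::nat \<Rightarrow> mpoly). (\<forall>k<N. c k \<in> poly_ring n m \<and> f k \<in> S) \<and> p = (\<Sum>k<N. c k * f k)}"

definition gr_ideal :: "nat \<Rightarrow> nat \<Rightarrow> mpoly set \<Rightarrow> mpoly set" where
  "gr_ideal n m I = ideal_gen n m (top_comp ` (I - {0}))"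

definition rook_placement :: "nat \<Rightarrow> nat \<Rightarrow> (nat \<times> nat) set \<Rightarrow> bool" where
  "rook_placement n m R \<longleftrightarrow> R \<subseteq> {1..n} \<times> {1..m} \<and>
     (\<forall>i j i' j'. (i, j) \<in> R \<longrightarrow> (i', j') \<in> R \<longrightarrow> (i = i' \<longleftrightarrow> j = j'))"

definition rook_matrix :: "(nat \<times> nat) set \<Rightarrow> nat \<Rightarrow> nat \<Rightarrow> complex" where
  "rook_matrix R i j = (if (i, j) \<in> R then 1 else 0)"

definition Z_rook :: "nat \<Rightarrow> nat \<Rightarrow> nat \<Rightarrow> (nat \<Rightarrow> nat \<Rightarrow> complex) set" where
  "Z_rook n m d = rook_matrix ` {R. rook_placement n m R \<and> card R = d}"

definition rook_monomial :: "(nat \<times> nat) set \<Rightarrow> mpoly" where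
  "rook_monomial R = Poly_Mapping.single (\<Sum>v\<in>R. Poly_Mapping.single v 1) 1"

definition const_mpoly :: "complex \<Rightarrow> mpoly" where
  "const_mpoly c = Poly_Mapping.single 0 c"

end

theory Submission imports Defs begin

text \<open>Every monomial other than the m(R) with |R| <= r lies in gr I(Z_(n,m,r)). If it is
divisible by some x_v^2, it is a multiple of x_v^2, the top component of x_v^2 - x_v, which
vanishes on all 0/1 matrices. If it is squarefree, it is x^S for a set S that is not a rook
placement with at most r rooks; then S lies in no placement with exactly r rooks, so x^S
vanishes on Z_(n,m,r) and is its own top component. Hence every polynomial is congruent
modulo gr I to its rook-monomial part, which is zero for a homogeneous polynomial of degree
greater than r.\<close>

lemma ideal_gen_zero: "0 \<in> ideal_gen n m S"
  unfolding ideal_gen_def by (intro CollectI exI[of _ 0]) simp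

lemma ideal_gen_add:
  assumes "p \<in> ideal_gen n m S" "q \<in> ideal_gen n m S"
  shows "p + q \<in> ideal_gen n m S"
proof -
  obtain N1 :: nat and c1 f1
    where p_gen: "\<forall>k<N1. c1 k \<in> poly_ring n m \<and> f1 k \<in> S" "p = (\<Sum>k<N1. c1 k * f1 k)"
    using assms(1) unfolding ideal_gen_def by blast
  obtain N2 :: nat and c2 f2
    where q_gen: "\<forall>k<N2. c2 k \<in> poly_ring n m \<and> f2 k \<in> S" "q = (\<Sum>k<N2. c2 k * f2 k)"
    using assms(2) unfolding ideal_gen_def by blast
  define c where "c k = (if k < N1 then c1 k else c2 (k - N1))" for k
  define f where "f k = (if k < N1 then f1 k else f2 (k - N1))" for k
  have split_sum: "(\<Sum>k<N1+N. g k) = (\<Sum>k<N1. g k) + (\<Sum>k<N. g (k + N1))"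
    for N and g :: "nat \<Rightarrow> mpoly"
    by (induction N) (simp_all add: add.commute add.left_commute)
  have "(\<Sum>k<N1+N2. c k * f k) = (\<Sum>k<N1. c k * f k) + (\<Sum>k<N2. c (k + N1) * f (k + N1))"
    by (rule split_sum)
  also have "\<dots> = p + q"
    using p_gen(2) q_gen(2) by (simp add: c_def f_def)
  finally have "p + q = (\<Sum>k<N1+N2. c k * f k)" ..
  moreover have "\<forall>k<N1+N2. c k \<in> poly_ring n m \<and> f k \<in> S"
    using p_gen(1) q_gen(1) by (auto simp: c_def f_def)
  ultimately show ?thesis
    unfolding ideal_gen_def by blast
qed

lemma ideal_gen_sum:
  assumes "\<And>a. a \<in> A \<Longrightarrow> g a \<in> ideal_gen n m S"
  shows "sum g A \<in> ideal_gen n m S"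
  using assms by (induction A rule: infinite_finite_induct) (auto intro: ideal_gen_zero ideal_gen_add)

lemma gr_ideal_sum:
  assumes "\<And>a. a \<in> A \<Longrightarrow> g a \<in> gr_ideal n m I"
  shows "sum g A \<in> gr_ideal n m I"
  using assms unfolding gr_ideal_def by (rule ideal_gen_sum)

lemma ideal_gen_mult_generator:
  assumes "c \<in> poly_ring n m" "f \<in> S"
  shows "c * f \<in> ideal_gen n m S"
  unfolding ideal_gen_def
  by (intro CollectI exI[of _ 1] exI[of _ "\<lambda>_. c"] exI[of _ "\<lambda>_. f"]) (use assms in auto)

lemma mult_top_comp_in_gr_ideal:
  assumes "c \<in> poly_ring n m" "f \<in> I" "f \<noteq> 0"
  shows "c * top_comp f \<in> gr_ideal n m I"
  unfolding gr_ideal_def using assms by (intro ideal_gen_mult_generator) auto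

lemma diff_sum_single_lookup:
  assumes "finite M"
  shows "p - (\<Sum>a\<in>M. Poly_Mapping.single a (Poly_Mapping.lookup p a))
       = (\<Sum>a\<in>Poly_Mapping.keys p - M. Poly_Mapping.single a (Poly_Mapping.lookup p a))"
  by (rule poly_mapping_eqI)
    (use assms in \<open>auto simp: lookup_minus lookup_sum lookup_single when_def in_keys_iff\<close>)

definition set_monom :: "(nat \<times> nat) set \<Rightarrow> monom" where
  "set_monom R = (\<Sum>v\<in>R. Poly_Mapping.single v 1)"

lemma rook_monomial_eq: "rook_monomial R = Poly_Mapping.single (set_monom R) 1"
  unfolding rook_monomial_def set_monom_def ..

lemma lookup_set_monom:
  "finite R \<Longrightarrow> Poly_Mapping.lookup (set_monom R) v = (if v \<in> R then 1 else 0)"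
  unfolding set_monom_def lookup_sum lookup_single by (simp add: when_def)

lemma keys_set_monom: "finite R \<Longrightarrow> Poly_Mapping.keys (set_monom R) = R"
  by (auto simp: in_keys_iff lookup_set_monom split: if_splits)

lemma mdeg_set_monom: "finite R \<Longrightarrow> mdeg (set_monom R) = card R"
  unfolding mdeg_def by (simp add: keys_set_monom lookup_set_monom)

lemma inj_on_set_monom: "inj_on set_monom {R. finite R}"
  by (rule inj_onI) (metis keys_set_monom mem_Collect_eq)

lemma squarefree_eq_set_monom:
  assumes "\<forall>v. Poly_Mapping.lookup a v \<le> 1"
  shows "a = set_monom (Poly_Mapping.keys a)"
proof (rule poly_mapping_eqI)
  fix v
  show "Poly_Mapping.lookup a v = Poly_Mapping.lookup (set_monom (Poly_Mapping.keys a)) v"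
    using assms[rule_format, of v] by (auto simp: lookup_set_monom in_keys_iff)
qed

lemma single_eq_zero_iff: "Poly_Mapping.single a c = 0 \<longleftrightarrow> c = 0"
  by (metis lookup_single_eq lookup_zero single_zero)

lemma mdeg_single: "mdeg (Poly_Mapping.single v k) = k"
  unfolding mdeg_def by simp

lemma eval_mpoly_single:
  "eval_mpoly (Poly_Mapping.single a c) A
     = c * (\<Prod>v\<in>Poly_Mapping.keys a. A (fst v) (snd v) ^ Poly_Mapping.lookup a v)"
  unfolding eval_mpoly_def by simp

lemma eval_mpoly_diff: "eval_mpoly (p - q) A = eval_mpoly p A - eval_mpoly q A"
proof -
  let ?K = "Poly_Mapping.keys p \<union> Poly_Mapping.keys q"
  let ?t = "\<lambda>p a. Poly_Mapping.lookup p a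
    * (\<Prod>v\<in>Poly_Mapping.keys a. A (fst v) (snd v) ^ Poly_Mapping.lookup a v)"
  have eval_over_K: "eval_mpoly p' A = (\<Sum>a\<in>?K. ?t p' a)"
    if "Poly_Mapping.keys p' \<subseteq> ?K" for p'
    unfolding eval_mpoly_def
    by (rule sum.mono_neutral_left) (use that in \<open>auto simp: in_keys_iff\<close>)
  have "Poly_Mapping.keys (p - q) \<subseteq> ?K"
    by (auto simp: in_keys_iff lookup_minus)
  then show ?thesis
    by (simp add: eval_over_K lookup_minus sum_subtractf left_diff_distrib)
qed

lemma eval_mpoly_single_rook_matrix:
  "eval_mpoly (Poly_Mapping.single a c) (rook_matrix R)
     = (if Poly_Mapping.keys a \<subseteq> R then c else 0)"
  unfolding eval_mpoly_single rook_matrix_def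
  by (auto simp: in_keys_iff intro!: prod.neutral prod_zero)

lemma homogeneous_lookup_eq_0:
  assumes "homogeneous d p" "mdeg a \<noteq> d"
  shows "Poly_Mapping.lookup p a = 0"
  using assms unfolding homogeneous_def by (auto simp: in_keys_iff)

lemma top_comp_single: "top_comp (Poly_Mapping.single a c) = Poly_Mapping.single a c"
  unfolding top_comp_def pdeg_def by simp

lemma top_comp_diff_single:
  assumes "mdeg b < mdeg a"
  shows "top_comp (Poly_Mapping.single a 1 - Poly_Mapping.single b 1) = Poly_Mapping.single a 1"
proof -
  let ?q = "Poly_Mapping.single a (1::complex) - Poly_Mapping.single b 1"
  have "a \<noteq> b" using assms by auto
  then have lookup_q: "Poly_Mapping.lookup ?q x = (if x = a then 1 else if x = b then -1 else 0)" for x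
    by (auto simp: lookup_minus lookup_single when_def)
  then have keys_q: "Poly_Mapping.keys ?q = {a, b}"
    by (auto simp: in_keys_iff split: if_splits)
  have "pdeg ?q = mdeg a"
    unfolding pdeg_def keys_q using assms by simp
  then show ?thesis
    unfolding top_comp_def keys_q using assms \<open>a \<noteq> b\<close> lookup_q by simp
qed

lemma rook_placement_subset:
  assumes "rook_placement n m R" "S \<subseteq> R"
  shows "rook_placement n m S"
proof -
  have box: "R \<subseteq> {1..n} \<times> {1..m}"
    and lines: "\<And>i j i' j'. (i, j) \<in> R \<Longrightarrow> (i', j') \<in> R
                  \<Longrightarrow> (i = i' \<longleftrightarrow> j = j')"
    using assms(1) unfolding rook_placement_def by auto
  show ?thesis
    unfolding rook_placement_def
  proof (intro conjI allI impI)
    show "S \<subseteq> {1..n} \<times> {1..m}"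
      using assms(2) box by (rule subset_trans)
    fix i j i' j'
    assume "(i, j) \<in> S" "(i', j') \<in> S"
    with assms(2) show "(i = i') = (j = j')"
      by (intro lines) auto
  qed
qed

lemma finite_rook_placement: "rook_placement n m R \<Longrightarrow> finite R"
  unfolding rook_placement_def by (meson finite_SigmaI finite_atLeastAtMost finite_subset)

lemma finite_rook_placements: "finite {R. rook_placement n m R \<and> P R}"
  by (rule finite_subset[of _ "Pow ({1..n} \<times> {1..m})"]) (auto simp: rook_placement_def)

lemma monomial_in_gr_ideal_if_vanishing:
  assumes "Poly_Mapping.keys a \<subseteq> {1..n} \<times> {1..m}"
    and "\<forall>A\<in>Z. eval_mpoly (Poly_Mapping.single a 1) A = 0"
  shows "Poly_Mapping.single a k \<in> gr_ideal n m (vanishing_ideal n m Z)"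
proof -
  have "Poly_Mapping.single a 1 \<in> vanishing_ideal n m Z"
    using assms unfolding vanishing_ideal_def poly_ring_def by simp
  moreover have "Poly_Mapping.single 0 k \<in> poly_ring n m"
    unfolding poly_ring_def by simp
  ultimately have "Poly_Mapping.single 0 k * top_comp (Poly_Mapping.single a 1)
      \<in> gr_ideal n m (vanishing_ideal n m Z)"
    by (intro mult_top_comp_in_gr_ideal) (simp_all add: single_eq_zero_iff)
  then show ?thesis
    by (simp add: top_comp_single mult_single)
qed

lemma nonsquarefree_monomial_in_gr_ideal:
  assumes box: "Poly_Mapping.keys a \<subseteq> {1..n} \<times> {1..m}"
    and square: "Poly_Mapping.lookup a (i, j) \<ge> 2"
    and zero_one: "\<forall>A\<in>Z. A i j ^ 2 = A i j"
  shows "Poly_Mapping.single a k \<in> gr_ideal n m (vanishing_ideal n m Z)"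
proof -
  define x2 x1
    where "x2 = Poly_Mapping.single (i, j) (2::nat)" and "x1 = Poly_Mapping.single (i, j) (1::nat)"
  let ?q = "Poly_Mapping.single x2 (1::complex) - Poly_Mapping.single x1 1"
  have "(i, j) \<in> Poly_Mapping.keys a"
    using square by (simp add: in_keys_iff)
  then have ij: "(i, j) \<in> {1..n} \<times> {1..m}"
    using box by blast
  have "Poly_Mapping.keys ?q \<subseteq> {x2, x1}"
    by (auto simp: in_keys_iff lookup_minus lookup_single when_def split: if_splits)
  then have "?q \<in> poly_ring n m"
    using ij unfolding poly_ring_def x2_def x1_def by auto
  moreover have "eval_mpoly ?q A = A i j ^ 2 - A i j" for A
    by (simp add: eval_mpoly_diff eval_mpoly_single x2_def x1_def)
  ultimately have "?q \<in> vanishing_ideal n m Z"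
    using zero_one unfolding vanishing_ideal_def by simp
  moreover have top: "top_comp ?q = Poly_Mapping.single x2 1"
    using top_comp_diff_single[of x1 x2] by (simp add: x2_def x1_def mdeg_single)
  moreover have "?q \<noteq> 0"
    using top by (auto simp: top_comp_def single_eq_zero_iff)
  moreover have "Poly_Mapping.keys (a - x2) \<subseteq> Poly_Mapping.keys a"
    by (auto simp: in_keys_iff lookup_minus)
  then have "Poly_Mapping.single (a - x2) k \<in> poly_ring n m"
    using box unfolding poly_ring_def by auto
  ultimately have "Poly_Mapping.single (a - x2) k * Poly_Mapping.single x2 1
      \<in> gr_ideal n m (vanishing_ideal n m Z)"
    using mult_top_comp_in_gr_ideal by metis
  moreover have "a - x2 + x2 = a"
    by (rule poly_mapping_eqI)
      (use square in \<open>auto simp: lookup_add lookup_minus x2_def lookup_single when_def\<close>)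
  ultimately show ?thesis
    by (simp add: mult_single)
qed

lemma monomial_in_gr_ideal_Z_rook:
  assumes box: "Poly_Mapping.keys a \<subseteq> {1..n} \<times> {1..m}"
    and not_rook: "a \<notin> set_monom ` {R. rook_placement n m R \<and> card R \<le> r}"
  shows "Poly_Mapping.single a k \<in> gr_ideal n m (vanishing_ideal n m (Z_rook n m r))"
proof (cases "\<forall>v. Poly_Mapping.lookup a v \<le> 1")
  case False
  then obtain i j where "\<not> Poly_Mapping.lookup a (i, j) \<le> 1"
    by auto
  then have "Poly_Mapping.lookup a (i, j) \<ge> 2"
    by linarith
  moreover have "\<forall>A\<in>Z_rook n m r. A i j ^ 2 = A i j"
    by (auto simp: Z_rook_def rook_matrix_def)
  ultimately show ?thesis
    using nonsquarefree_monomial_in_gr_ideal[OF box] by blast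
next
  case True
  then have squarefree: "a = set_monom (Poly_Mapping.keys a)"
    by (rule squarefree_eq_set_monom)
  have "\<not> Poly_Mapping.keys a \<subseteq> R" if "rook_placement n m R" "card R = r" for R
  proof
    assume "Poly_Mapping.keys a \<subseteq> R"
    then have "rook_placement n m (Poly_Mapping.keys a)" "card (Poly_Mapping.keys a) \<le> r"
      using rook_placement_subset[OF that(1)] card_mono[OF finite_rook_placement[OF that(1)]] that(2)
      by auto
    then show False
      using not_rook squarefree by blast
  qed
  then have "\<forall>A\<in>Z_rook n m r. eval_mpoly (Poly_Mapping.single a 1) A = 0"
    by (auto simp: Z_rook_def eval_mpoly_single_rook_matrix)
  then show ?thesis
    using monomial_in_gr_ideal_if_vanishing[OF box] by blast
qed

lemma diff_rook_part_in_gr_ideal: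
  assumes "p \<in> poly_ring n m"
  shows "p - (\<Sum>R\<in>{R. rook_placement n m R \<and> card R \<le> r}.
              const_mpoly (Poly_Mapping.lookup p (set_monom R)) * rook_monomial R)
           \<in> gr_ideal n m (vanishing_ideal n m (Z_rook n m r))"
proof -
  let ?Rk = "{R. rook_placement n m R \<and> card R \<le> r}"
  have "inj_on set_monom ?Rk"
    using inj_on_set_monom by (rule inj_on_subset) (auto dest: finite_rook_placement)
  then have "(\<Sum>R\<in>?Rk. const_mpoly (Poly_Mapping.lookup p (set_monom R)) * rook_monomial R)
      = (\<Sum>a\<in>set_monom ` ?Rk. Poly_Mapping.single a (Poly_Mapping.lookup p a))"
    by (simp add: sum.reindex const_mpoly_def rook_monomial_eq mult_single)
  also have "p - \<dots>
      = (\<Sum>a\<in>Poly_Mapping.keys p - set_monom ` ?Rk. Poly_Mapping.single a (Poly_Mapping.lookup p a))"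
    using finite_rook_placements by (intro diff_sum_single_lookup finite_imageI)
  also have "\<dots> \<in> gr_ideal n m (vanishing_ideal n m (Z_rook n m r))"
    using assms by (intro gr_ideal_sum monomial_in_gr_ideal_Z_rook) (auto simp: poly_ring_def)
  finally show ?thesis .
qed

theorem mainTheorem7:
  fixes n m r :: nat
  assumes "1 \<le> n" and "1 \<le> m" and "r \<le> min m n"
  shows "(\<forall>p \<in> poly_ring n m. \<exists>c :: (nat \<times> nat) set \<Rightarrow> complex.
            p - (\<Sum>R\<in>{R. rook_placement n m R \<and> card R \<le> r}. const_mpoly (c R) * rook_monomial R)
              \<in> gr_ideal n m (vanishing_ideal n m (Z_rook n m r)))
       \<and> (\<forall>d > r. \<forall>p \<in> poly_ring n m. homogeneous d p \<longrightarrow>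
            p \<in> gr_ideal n m (vanishing_ideal n m (Z_rook n m r)))"
proof -
  let ?G = "gr_ideal n m (vanishing_ideal n m (Z_rook n m r))"
  let ?Rk = "{R. rook_placement n m R \<and> card R \<le> r}"
  have "p \<in> ?G" if "r < d" "p \<in> poly_ring n m" "homogeneous d p" for d p
  proof -
    have "Poly_Mapping.lookup p (set_monom R) = 0" if "R \<in> ?Rk" for R
      using that \<open>r < d\<close> \<open>homogeneous d p\<close> finite_rook_placement
      by (intro homogeneous_lookup_eq_0) (auto simp: mdeg_set_monom)
    then show ?thesis
      using diff_rook_part_in_gr_ideal[OF \<open>p \<in> poly_ring n m\<close>, of r]
      by (simp add: const_mpoly_def)
  qed
  moreover have "\<exists>c. p - (\<Sum>R\<in>?Rk. const_mpoly (c R) * rook_monomial R) \<in> ?G"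
    if "p \<in> poly_ring n m" for p
    using diff_rook_part_in_gr_ideal[OF that, of r]
    by (rule exI[of _ "\<lambda>R. Poly_Mapping.lookup p (set_monom R)"])
  ultimately show ?thesis
    by blast
qed

end
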